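(* Under the hypotheses of the previous lemma (standing assumptions, SLC and BUC, each $B_k$ nonnegative doubly stochastic scrambling with nonzero entries at least a fixed $\kappa>0$), and assuming the step sizes satisfy $\alpha_k>0$, $\alpha_{k+1}\le\alpha_k$ for all $k$, $\sum_k\alpha_k=\infty$ and $\sum_k\alpha_k^2<\infty$, the server iterates reach consensus asymptotically: $$\lim_{k\to\infty}\max_{I,G}\|x^I_{0,k}-x^G_{0,k}\|=0.$$
   Context: Standing setup. Integers $S\ge1$ (servers), $C\ge1$ (clients), $D\ge1$, $\Delta\ge1$. $\mathcal{X}\subseteq\mathbb{R}^D$ is a nonempty convex compact set and $\mathcal{P}_{\mathcal{X}}$ is Euclidean projection onto $\mathcal{X}$. For $h=1,\dots,C$, $f_h:\mathbb{R}^D\to\mathbb{R}$ is continuously differentiable and convex with gradient $g_h$; there are constants $L_h$ with $\|g_h(x)\|\le L_h$ for all $x\in\mathcal{X}$ and constants $N_h>0$ with $\|g_h(x)-g_h(y)\|\le N_h\|x-y\|$ for all $x,y\in\mathcal{X}$. Set $\mathbf{L}=\sum_h L_h$, $\mathbf{N}=\sum_h N_h$. Norms are Euclidean. Weight matrices $W_{i,k}\in\mathbb{R}^{S\times C}$ ($0\le i\le\Delta-1$, $k\ge0$), entries possibly negative. Symmetric Learning Condition (SLC): there is $M>0$ with $\sum_{i=1}^{\Delta}\sum_{J=1}^S W_{i-1,k}[J,h]=M$ for all $k\ge0$ and all $h$. Bounded Update Condition (BUC): there is $\bar M>0$ with $\sum_{i=1}^{\Delta}\sum_{J=1}^S |W_{i-1,k}[J,h]|\le\bar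 M$ for all $k,h$. Consensus matrices $B_k\in\mathbb{R}^{S\times S}$ have nonnegative entries. Iteration: given $x^J_{0,0}\in\mathcal{X}$ ($J=1,\dots,S$), for each $k\ge0$ and $i=1,\dots,\Delta$, $x^J_{i,k}=\mathcal{P}_{\mathcal{X}}\big[x^J_{i-1,k}-\alpha_k\sum_{h=1}^C W_{i-1,k}[J,h]\,g_h(x^J_{i-1,k})\big]$, and then $x^I_{0,k+1}=\sum_{J=1}^S B_k[I,J]\,x^J_{\Delta,k}$. A square matrix $B$ is scrambling if for every two rows $I,G$ there is a column $J$ with $B[I,J]>0$ and $B[G,J]>0$. *)

theory Defs
  imports "HOL-Analysis.Analysis"
begin

text \<open>Euclidean projection onto X: the library's closest_point.
  Square S x S matrices are represented as functions nat => nat => real with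
  indices ranging over {1..S}.\<close>

definition scrambling :: "nat \<Rightarrow> (nat \<Rightarrow> nat \<Rightarrow> real) \<Rightarrow> bool" where
  "scrambling S B \<longleftrightarrow>
     (\<forall>I\<in>{1..S}. \<forall>G\<in>{1..S}. \<exists>J\<in>{1..S}. B I J > 0 \<and> B G J > 0)"

definition doubly_stochastic :: "nat \<Rightarrow> (nat \<Rightarrow> nat \<Rightarrow> real) \<Rightarrow> bool" where
  "doubly_stochastic S B \<longleftrightarrow>
     (\<forall>I\<in>{1..S}. \<forall>J\<in>{1..S}. B I J \<ge> 0) \<and>
     (\<forall>I\<in>{1..S}. (\<Sum>J\<in>{1..S}. B I J) = 1) \<and>
     (\<forall>J\<in>{1..S}. (\<Sum>I\<in>{1..S}. B I J) = 1)"

end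

theory Submission
  imports Defs
begin

text \<open>During round \<open>k\<close> every server moves by at most \<open>K \<alpha>\<^sub>k\<close>, \<open>K = Mbar \<Sum>\<^sub>h L\<^sub>h\<close>, since
  projection onto \<open>X\<close> is nonexpansive and BUC bounds the total gradient weight. Consensus with a doubly stochastic
  scrambling matrix whose positive entries are at least \<open>\<kappa>\<close> contracts the diameter of any
  configuration by the factor \<open>1 - \<kappa>\<close>, because any two rows share a column carrying weight
  \<open>\<kappa>\<close> in both. Hence the consensus gap \<open>D\<^sub>k\<close> satisfies
  \<open>D\<^sub>k\<^sub>+\<^sub>1 \<le> (1 - \<kappa>)(D\<^sub>k + 2 K \<alpha>\<^sub>k)\<close>, and \<open>\<alpha>\<^sub>k \<rightarrow> 0\<close> (from \<open>\<Sum> \<alpha>\<^sub>k\<^sup>2 < \<infinity>\<close>) forces \<open>D\<^sub>k \<rightarrow> 0\<close>.\<close>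

lemma LIMSEQ_zero_contraction_recurrence:
  fixes D a :: "nat \<Rightarrow> real"
  assumes D_nonneg: "\<And>k. D k \<ge> 0" and "0 \<le> q" "q < 1" and a: "a \<longlonglongrightarrow> 0"
    and rec: "\<And>k. D (Suc k) \<le> q * D k + a k"
  shows "D \<longlonglongrightarrow> 0"
proof (rule LIMSEQ_I)
  fix r :: real assume r: "0 < r"
  then have "r * (1 - q) / 2 > 0" using \<open>q < 1\<close> by simp
  from LIMSEQ_D[OF a this] obtain k0
    where k0: "\<And>k. k \<ge> k0 \<Longrightarrow> norm (a k) < r * (1 - q) / 2" by auto
  have bound: "D (k0 + n) \<le> q ^ n * D k0 + r / 2" for n
  proof (induction n)
    case 0 then show ?case using r by simp
  next
    case (Suc n)
    have "D (k0 + Suc n) \<le> q * D (k0 + n) + a (k0 + n)" using rec[of "k0 + n"] by simp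
    also have "\<dots> \<le> q * (q ^ n * D k0 + r / 2) + r * (1 - q) / 2"
      using mult_left_mono[OF Suc \<open>0 \<le> q\<close>] k0[of "k0 + n"] by auto
    also have "\<dots> = q ^ Suc n * D k0 + r / 2" by (simp add: field_simps)
    finally show ?case .
  qed
  have "(\<lambda>n. q ^ n * D k0) \<longlonglongrightarrow> 0"
    by (intro tendsto_mult_left_zero LIMSEQ_power_zero) (use \<open>0 \<le> q\<close> \<open>q < 1\<close> in auto)
  from LIMSEQ_D[OF this, of "r / 2"] r
  obtain n0 where n0: "\<And>n. n \<ge> n0 \<Longrightarrow> \<bar>q ^ n * D k0\<bar> < r / 2" by auto
  show "\<exists>no. \<forall>n\<ge>no. norm (D n - 0) < r"
  proof (intro exI allI impI)
    fix n assume n: "n \<ge> k0 + n0"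
    have "D n \<le> q ^ (n - k0) * D k0 + r / 2" using bound[of "n - k0"] n by simp
    moreover have "\<bar>q ^ (n - k0) * D k0\<bar> < r / 2" using n0[of "n - k0"] n by simp
    ultimately show "norm (D n - 0) < r" using D_nonneg[of n] by simp
  qed
qed

text \<open>Splitting off the common part \<open>min b c\<close>, whose mass is at least \<open>\<kappa>\<close>, leaves two
  nonnegative vectors of equal mass at most \<open>1 - \<kappa>\<close>.\<close>

lemma stochastic_diff_sum_le:
  fixes b c t :: "nat \<Rightarrow> real"
  assumes "finite A" "J0 \<in> A" "\<forall>J\<in>A. b J \<ge> 0" "\<forall>J\<in>A. c J \<ge> 0"
    and b_sum: "sum b A = 1" and c_sum: "sum c A = 1"
    and "b J0 \<ge> \<kappa>" "c J0 \<ge> \<kappa>" and t_osc: "\<forall>J\<in>A. \<forall>J'\<in>A. t J - t J' \<le> d"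
  shows "(\<Sum>J\<in>A. (b J - c J) * t J) \<le> (1 - \<kappa>) * d"
proof -
  define m where "m J = min (b J) (c J)" for J
  define s where "s = sum m A"
  define T where "T = Max (t ` A)"
  define \<tau> where "\<tau> = Min (t ` A)"
  have T: "\<forall>J\<in>A. t J \<le> T" and \<tau>: "\<forall>J\<in>A. \<tau> \<le> t J"
    using \<open>finite A\<close> T_def \<tau>_def by auto
  have "T \<in> t ` A" "\<tau> \<in> t ` A"
    unfolding T_def \<tau>_def using \<open>finite A\<close> \<open>J0 \<in> A\<close> by (auto intro!: Max_in Min_in)
  then have osc: "0 \<le> T - \<tau>" "T - \<tau> \<le> d" using t_osc T \<tau> by auto
  have "m J0 \<le> s"
    unfolding s_def by (rule member_le_sum) (use assms m_def in auto)
  then have s_ge: "\<kappa> \<le> s" using assms m_def by auto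
  have "b J0 \<le> sum b A" by (rule member_le_sum) (use assms in auto)
  then have "\<kappa> \<le> 1" using assms by simp
  have "(\<Sum>J\<in>A. (b J - m J) * t J) \<le> (\<Sum>J\<in>A. (b J - m J) * T)"
    by (rule sum_mono) (use T m_def in \<open>auto intro: mult_left_mono\<close>)
  also have "\<dots> = (1 - s) * T"
    by (simp add: sum_distrib_right[symmetric] sum_subtractf b_sum s_def)
  finally have upper: "(\<Sum>J\<in>A. (b J - m J) * t J) \<le> (1 - s) * T" .
  have "(\<Sum>J\<in>A. (c J - m J) * \<tau>) \<le> (\<Sum>J\<in>A. (c J - m J) * t J)"
    by (rule sum_mono) (use \<tau> m_def in \<open>auto intro: mult_left_mono\<close>)
  moreover have "(\<Sum>J\<in>A. (c J - m J) * \<tau>) = (1 - s) * \<tau>"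
    by (simp add: sum_distrib_right[symmetric] sum_subtractf c_sum s_def)
  ultimately have lower: "(1 - s) * \<tau> \<le> (\<Sum>J\<in>A. (c J - m J) * t J)" by simp
  have "(\<Sum>J\<in>A. (b J - c J) * t J)
        = (\<Sum>J\<in>A. (b J - m J) * t J) - (\<Sum>J\<in>A. (c J - m J) * t J)"
    by (simp add: sum_subtractf[symmetric] algebra_simps)
  also have "\<dots> \<le> (1 - s) * (T - \<tau>)" using upper lower by (simp add: algebra_simps)
  also have "\<dots> \<le> (1 - \<kappa>) * (T - \<tau>)" by (rule mult_right_mono) (use s_ge osc in auto)
  also have "\<dots> \<le> (1 - \<kappa>) * d" by (rule mult_left_mono) (use osc \<open>\<kappa> \<le> 1\<close> in auto)
  finally show ?thesis .
qed

lemma norm_stochastic_diff_le: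
  fixes b c :: "nat \<Rightarrow> real" and y :: "nat \<Rightarrow> 'a::real_inner"
  assumes "finite A" "J0 \<in> A" "\<forall>J\<in>A. b J \<ge> 0" "\<forall>J\<in>A. c J \<ge> 0"
    and "sum b A = 1" "sum c A = 1" "b J0 \<ge> \<kappa>" "c J0 \<ge> \<kappa>"
    and y_diam: "\<forall>J\<in>A. \<forall>J'\<in>A. norm (y J - y J') \<le> d"
  shows "norm (\<Sum>J\<in>A. (b J - c J) *\<^sub>R y J) \<le> (1 - \<kappa>) * d"
proof -
  define z where "z = (\<Sum>J\<in>A. (b J - c J) *\<^sub>R y J)"
  have "b J0 \<le> sum b A" by (rule member_le_sum) (use assms in auto)
  then have "\<kappa> \<le> 1" using assms by simp
  have "0 \<le> d" using y_diam \<open>J0 \<in> A\<close> by force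
  have "norm z * norm z = (\<Sum>J\<in>A. (b J - c J) *\<^sub>R y J) \<bullet> z"
    by (simp add: z_def flip: power2_eq_square power2_norm_eq_inner)
  also have "\<dots> = (\<Sum>J\<in>A. (b J - c J) * (y J \<bullet> z))"
    by (simp add: inner_sum_left)
  also have "\<dots> \<le> (1 - \<kappa>) * (d * norm z)"
  proof (rule stochastic_diff_sum_le[OF assms(1-8)], intro ballI)
    fix J J' assume "J \<in> A" "J' \<in> A"
    have "y J \<bullet> z - y J' \<bullet> z \<le> norm (y J - y J') * norm z"
      using norm_cauchy_schwarz[of "y J - y J'" z] by (simp add: inner_diff_left)
    also have "\<dots> \<le> d * norm z"
      by (rule mult_right_mono) (use y_diam \<open>J \<in> A\<close> \<open>J' \<in> A\<close> in auto)
    finally show "y J \<bullet> z - y J' \<bullet> z \<le> d * norm z" .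
  qed
  finally have "norm z * norm z \<le> ((1 - \<kappa>) * d) * norm z" by (simp add: algebra_simps)
  then show ?thesis
    using \<open>\<kappa> \<le> 1\<close> \<open>0 \<le> d\<close> unfolding z_def[symmetric]
    by (cases "norm z = 0") (simp_all add: mult_le_cancel_right)
qed

lemma norm_diff_le_sum_increments:
  fixes y :: "nat \<Rightarrow> 'a::real_normed_vector"
  assumes "\<And>i. i \<in> {1..n} \<Longrightarrow> norm (y i - y (i - 1)) \<le> e i"
  shows "norm (y n - y 0) \<le> (\<Sum>i\<in>{1..n}. e i)"
  using assms
proof (induction n)
  case 0 then show ?case by simp
next
  case (Suc n)
  have "norm (y (Suc n) - y 0) \<le> norm (y (Suc n) - y n) + norm (y n - y 0)"
    using norm_triangle_ineq[of "y (Suc n) - y n" "y n - y 0"] by simp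
  also have "\<dots> \<le> e (Suc n) + (\<Sum>i\<in>{1..n}. e i)"
    using Suc.prems[of "Suc n"] Suc.IH Suc.prems by (intro add_mono) auto
  finally show ?case by (simp add: add.commute)
qed

lemma norm_closest_point_step_le:
  assumes "convex X" "closed X" "v \<in> X"
  shows "norm (closest_point X (v - w) - v) \<le> norm w"
  using closest_point_lipschitz[OF assms(1,2), of "v - w" v] closest_point_self[OF assms(3)] assms
  by (auto simp: dist_norm)

locale projected_consensus =
  fixes S C \<Delta> :: nat
    and X :: "'a::euclidean_space set"
    and g :: "nat \<Rightarrow> 'a \<Rightarrow> 'a" and L :: "nat \<Rightarrow> real"
    and W :: "nat \<Rightarrow> nat \<Rightarrow> nat \<Rightarrow> nat \<Rightarrow> real" and Mbar :: real
    and B :: "nat \<Rightarrow> nat \<Rightarrow> nat \<Rightarrow> real" and \<kappa> :: real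
    and \<alpha> :: "nat \<Rightarrow> real"
    and x :: "nat \<Rightarrow> nat \<Rightarrow> nat \<Rightarrow> 'a"
  assumes S_pos: "S \<ge> 1"
    and X_ne: "X \<noteq> {}" and X_convex: "convex X" and X_closed: "closed X"
    and g_bound: "\<And>h y. h \<in> {1..C} \<Longrightarrow> y \<in> X \<Longrightarrow> norm (g h y) \<le> L h"
    and W_bound: "\<And>k h. h \<in> {1..C} \<Longrightarrow>
                    (\<Sum>i\<in>{1..\<Delta>}. \<Sum>J\<in>{1..S}. \<bar>W (i - 1) k J h\<bar>) \<le> Mbar"
    and B_ds: "\<And>k. doubly_stochastic S (B k)"
    and B_scr: "\<And>k. scrambling S (B k)"
    and kappa_pos: "\<kappa> > 0"
    and B_kappa: "\<And>k I J. I \<in> {1..S} \<Longrightarrow> J \<in> {1..S} \<Longrightarrow> B k I J \<noteq> 0 \<Longrightarrow> B k I J \<ge> \<kappa>"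
    and alpha_nonneg: "\<And>k. \<alpha> k \<ge> 0"
    and x_init: "\<And>J. J \<in> {1..S} \<Longrightarrow> x J 0 0 \<in> X"
    and x_step: "\<And>J i k. J \<in> {1..S} \<Longrightarrow> i \<in> {1..\<Delta>} \<Longrightarrow>
        x J i k = closest_point X (x J (i - 1) k
                    - \<alpha> k *\<^sub>R (\<Sum>h\<in>{1..C}. W (i - 1) k J h *\<^sub>R g h (x J (i - 1) k)))"
    and x_cons: "\<And>I k. I \<in> {1..S} \<Longrightarrow> x I 0 (Suc k) = (\<Sum>J\<in>{1..S}. B k I J *\<^sub>R x J \<Delta> k)"
begin

definition consensus_gap :: "nat \<Rightarrow> real" where
  "consensus_gap k = Max {norm (x I 0 k - x G 0 k) | I G. I \<in> {1..S} \<and> G \<in> {1..S}}"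

definition drift_constant :: real where
  "drift_constant = Mbar * (\<Sum>h\<in>{1..C}. L h)"

lemma L_nonneg: "h \<in> {1..C} \<Longrightarrow> 0 \<le> L h"
  using g_bound X_ne norm_ge_zero order_trans by blast

lemma B_row_stochastic:
  assumes "I \<in> {1..S}"
  shows "\<forall>J\<in>{1..S}. B k I J \<ge> 0" "(\<Sum>J\<in>{1..S}. B k I J) = 1"
  using B_ds[of k] assms unfolding doubly_stochastic_def by auto

lemma kappa_le_1: "\<kappa> \<le> 1"
proof -
  obtain J where J: "J \<in> {1..S}" "B 0 1 J > 0"
    using B_scr[of 0] S_pos unfolding scrambling_def by force
  have "B 0 1 J \<le> (\<Sum>J\<in>{1..S}. B 0 1 J)"
    by (rule member_le_sum) (use J B_row_stochastic[of 1] S_pos in auto)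
  then show ?thesis using B_row_stochastic[of 1] B_kappa[of 1 J 0] J S_pos by simp
qed

lemma local_iterate_in_X:
  assumes "J \<in> {1..S}" "i \<le> \<Delta>" "x J 0 k \<in> X"
  shows "x J i k \<in> X"
  using assms x_step[of J i k] closest_point_in_set[OF X_closed X_ne]
  by (cases "i = 0") auto

lemma server_iterate_in_X: "J \<in> {1..S} \<Longrightarrow> x J 0 k \<in> X"
proof (induction k arbitrary: J)
  case 0 then show ?case using x_init by simp
next
  case (Suc k)
  have "x J' \<Delta> k \<in> X" if "J' \<in> {1..S}" for J'
    using local_iterate_in_X Suc.IH that by blast
  then show ?case
    using x_cons[OF Suc.prems, of k] B_row_stochastic[OF Suc.prems, of k]
      convex_sum[OF _ X_convex, of "{1..S}" "B k J" "\<lambda>J'. x J' \<Delta> k"] by simp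
qed

lemma local_step_le:
  assumes J: "J \<in> {1..S}" and i: "i \<in> {1..\<Delta>}"
  shows "norm (x J i k - x J (i - 1) k) \<le> \<alpha> k * (\<Sum>h\<in>{1..C}. \<bar>W (i - 1) k J h\<bar> * L h)"
proof -
  define v where "v = x J (i - 1) k"
  define s where "s = (\<Sum>h\<in>{1..C}. W (i - 1) k J h *\<^sub>R g h v)"
  have "i - 1 \<le> \<Delta>" using i by auto
  then have v: "v \<in> X" unfolding v_def using local_iterate_in_X J server_iterate_in_X by blast
  have "x J i k = closest_point X (v - \<alpha> k *\<^sub>R s)"
    using x_step[OF J i] by (simp add: v_def s_def)
  then have "norm (x J i k - x J (i - 1) k) \<le> norm (\<alpha> k *\<^sub>R s)"
    using norm_closest_point_step_le[OF X_convex X_closed v] by (simp only: v_def)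
  also have "\<dots> = \<alpha> k * norm s" using alpha_nonneg[of k] by simp
  also have "norm s \<le> (\<Sum>h\<in>{1..C}. \<bar>W (i - 1) k J h\<bar> * L h)"
    unfolding s_def
    by (rule order_trans[OF norm_sum sum_mono]) (use g_bound v in \<open>auto intro: mult_left_mono\<close>)
  finally show ?thesis by (simp add: alpha_nonneg mult_left_mono)
qed

lemma weighted_W_sum_le:
  assumes "J \<in> {1..S}"
  shows "(\<Sum>i\<in>{1..\<Delta>}. \<Sum>h\<in>{1..C}. \<bar>W (i - 1) k J h\<bar> * L h) \<le> drift_constant"
proof -
  have "(\<Sum>i\<in>{1..\<Delta>}. \<Sum>h\<in>{1..C}. \<bar>W (i - 1) k J h\<bar> * L h)
        = (\<Sum>h\<in>{1..C}. L h * (\<Sum>i\<in>{1..\<Delta>}. \<bar>W (i - 1) k J h\<bar>))"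
    by (subst sum.swap) (simp add: sum_distrib_left mult.commute)
  also have "\<dots> \<le> (\<Sum>h\<in>{1..C}. L h * Mbar)"
  proof (rule sum_mono)
    fix h assume h: "h \<in> {1..C}"
    have "(\<Sum>i\<in>{1..\<Delta>}. \<bar>W (i - 1) k J h\<bar>) \<le> (\<Sum>i\<in>{1..\<Delta>}. \<Sum>J'\<in>{1..S}. \<bar>W (i - 1) k J' h\<bar>)"
      by (intro sum_mono member_le_sum) (use assms in auto)
    also have "\<dots> \<le> Mbar" using W_bound[OF h] by simp
    finally show "L h * (\<Sum>i\<in>{1..\<Delta>}. \<bar>W (i - 1) k J h\<bar>) \<le> L h * Mbar"
      using L_nonneg[OF h] by (simp add: mult_left_mono)
  qed
  also have "\<dots> = drift_constant" by (simp add: drift_constant_def sum_distrib_left mult.commute)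
  finally show ?thesis .
qed

lemma round_drift_le:
  assumes "J \<in> {1..S}"
  shows "norm (x J \<Delta> k - x J 0 k) \<le> drift_constant * \<alpha> k"
proof -
  have "norm (x J \<Delta> k - x J 0 k) \<le> (\<Sum>i\<in>{1..\<Delta>}. \<alpha> k * (\<Sum>h\<in>{1..C}. \<bar>W (i - 1) k J h\<bar> * L h))"
    by (rule norm_diff_le_sum_increments) (use local_step_le assms in blast)
  also have "\<dots> \<le> \<alpha> k * drift_constant"
    using mult_left_mono[OF weighted_W_sum_le[OF assms, of k] alpha_nonneg[of k]]
    by (simp add: sum_distrib_left)
  finally show ?thesis by (simp add: mult.commute)
qed

lemma consensus_gap_set_finite_nonempty:
  "finite {norm (x I 0 k - x G 0 k) | I G. I \<in> {1..S} \<and> G \<in> {1..S}}"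
  "{norm (x I 0 k - x G 0 k) | I G. I \<in> {1..S} \<and> G \<in> {1..S}} \<noteq> {}"
proof -
  show "finite {norm (x I 0 k - x G 0 k) | I G. I \<in> {1..S} \<and> G \<in> {1..S}}"
    by (rule finite_image_set2) simp_all
  have "1 \<in> {1..S}" using S_pos by simp
  then show "{norm (x I 0 k - x G 0 k) | I G. I \<in> {1..S} \<and> G \<in> {1..S}} \<noteq> {}" by blast
qed

lemma consensus_gap_ge:
  assumes "I \<in> {1..S}" "G \<in> {1..S}"
  shows "norm (x I 0 k - x G 0 k) \<le> consensus_gap k"
  unfolding consensus_gap_def
  by (rule Max_ge[OF consensus_gap_set_finite_nonempty(1)]) (use assms in blast)

lemma consensus_gap_leI:
  assumes "\<And>I G. I \<in> {1..S} \<Longrightarrow> G \<in> {1..S} \<Longrightarrow> norm (x I 0 k - x G 0 k) \<le> r"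
  shows "consensus_gap k \<le> r"
  unfolding consensus_gap_def using assms
  by (intro Max.boundedI consensus_gap_set_finite_nonempty) blast

lemma consensus_gap_nonneg: "0 \<le> consensus_gap k"
  using consensus_gap_ge[of 1 1 k] S_pos by simp

lemma round_diameter_le:
  assumes "J \<in> {1..S}" "J' \<in> {1..S}"
  shows "norm (x J \<Delta> k - x J' \<Delta> k) \<le> consensus_gap k + 2 * drift_constant * \<alpha> k"
proof -
  have "norm (x J \<Delta> k - x J' \<Delta> k)
        \<le> norm (x J \<Delta> k - x J 0 k) + norm (x J 0 k - x J' 0 k) + norm (x J' \<Delta> k - x J' 0 k)"
    using norm_triangle_ineq4[of "(x J \<Delta> k - x J 0 k) + (x J 0 k - x J' 0 k)" "x J' \<Delta> k - x J' 0 k"]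
      norm_triangle_ineq[of "x J \<Delta> k - x J 0 k" "x J 0 k - x J' 0 k"]
    by (simp add: algebra_simps)
  then show ?thesis
    using round_drift_le[OF assms(1), of k] round_drift_le[OF assms(2), of k]
      consensus_gap_ge[OF assms, of k] by simp
qed

lemma consensus_gap_Suc_le:
  "consensus_gap (Suc k) \<le> (1 - \<kappa>) * (consensus_gap k + 2 * drift_constant * \<alpha> k)"
proof (rule consensus_gap_leI)
  fix I G assume I: "I \<in> {1..S}" and G: "G \<in> {1..S}"
  obtain J0 where J0: "J0 \<in> {1..S}" "B k I J0 > 0" "B k G J0 > 0"
    using B_scr[of k] I G unfolding scrambling_def by blast
  have "x I 0 (Suc k) - x G 0 (Suc k) = (\<Sum>J\<in>{1..S}. (B k I J - B k G J) *\<^sub>R x J \<Delta> k)"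
    using x_cons[OF I] x_cons[OF G] by (simp add: sum_subtractf[symmetric] scaleR_diff_left)
  also have "norm \<dots> \<le> (1 - \<kappa>) * (consensus_gap k + 2 * drift_constant * \<alpha> k)"
  proof (rule norm_stochastic_diff_le[OF _ J0(1)])
    show "\<kappa> \<le> B k I J0" "\<kappa> \<le> B k G J0"
      using B_kappa[OF I J0(1)] B_kappa[OF G J0(1)] J0(2,3) by auto
    show "\<forall>J\<in>{1..S}. \<forall>J'\<in>{1..S}.
        norm (x J \<Delta> k - x J' \<Delta> k) \<le> consensus_gap k + 2 * drift_constant * \<alpha> k"
      using round_diameter_le by blast
  qed (use B_row_stochastic[OF I] B_row_stochastic[OF G] in auto)
  finally show "norm (x I 0 (Suc k) - x G 0 (Suc k))
      \<le> (1 - \<kappa>) * (consensus_gap k + 2 * drift_constant * \<alpha> k)" .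
qed

theorem consensus_gap_tendsto_zero:
  assumes "\<alpha> \<longlonglongrightarrow> 0"
  shows "consensus_gap \<longlonglongrightarrow> 0"
proof (rule LIMSEQ_zero_contraction_recurrence[OF consensus_gap_nonneg])
  show "(\<lambda>k. (1 - \<kappa>) * (2 * drift_constant) * \<alpha> k) \<longlonglongrightarrow> 0"
    using tendsto_mult_right_zero[OF assms] by simp
  show "consensus_gap (Suc k) \<le> (1 - \<kappa>) * consensus_gap k + (1 - \<kappa>) * (2 * drift_constant) * \<alpha> k"
    for k using consensus_gap_Suc_le[of k] by (simp add: algebra_simps)
qed (use kappa_pos kappa_le_1 in auto)

end

lemma LIMSEQ_zero_of_summable_square:
  fixes a :: "nat \<Rightarrow> real"
  assumes "summable (\<lambda>k. (a k)\<^sup>2)"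
  shows "a \<longlonglongrightarrow> 0"
proof -
  have "(\<lambda>k. sqrt ((a k)\<^sup>2)) \<longlonglongrightarrow> sqrt 0"
    by (intro tendsto_real_sqrt summable_LIMSEQ_zero assms)
  then show ?thesis by (simp add: tendsto_rabs_zero_iff)
qed

theorem claim1:
  fixes S C \<Delta> :: nat
    and X :: "'a::euclidean_space set"
    and f :: "nat \<Rightarrow> 'a \<Rightarrow> real" and g :: "nat \<Rightarrow> 'a \<Rightarrow> 'a"
    and L N :: "nat \<Rightarrow> real"
    and W :: "nat \<Rightarrow> nat \<Rightarrow> nat \<Rightarrow> nat \<Rightarrow> real"
    and M Mbar \<kappa> :: real
    and B :: "nat \<Rightarrow> nat \<Rightarrow> nat \<Rightarrow> real"
    and \<alpha> :: "nat \<Rightarrow> real"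
    and x :: "nat \<Rightarrow> nat \<Rightarrow> nat \<Rightarrow> 'a"
  assumes S_pos: "S \<ge> 1" and C_pos: "C \<ge> 1" and Delta_pos: "\<Delta> \<ge> 1"
    and X_ne: "X \<noteq> {}" and X_convex: "convex X" and X_compact: "compact X"
    and f_deriv: "\<And>h y. h \<in> {1..C} \<Longrightarrow> (f h has_derivative (\<lambda>v. g h y \<bullet> v)) (at y)"
    and g_cont: "\<And>h. h \<in> {1..C} \<Longrightarrow> continuous_on UNIV (g h)"
    and f_convex: "\<And>h. h \<in> {1..C} \<Longrightarrow> convex_on UNIV (f h)"
    and g_bound: "\<And>h y. h \<in> {1..C} \<Longrightarrow> y \<in> X \<Longrightarrow> norm (g h y) \<le> L h"
    and N_pos: "\<And>h. h \<in> {1..C} \<Longrightarrow> N h > 0"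
    and g_lip: "\<And>h y z. h \<in> {1..C} \<Longrightarrow> y \<in> X \<Longrightarrow> z \<in> X \<Longrightarrow>
                  norm (g h y - g h z) \<le> N h * norm (y - z)"
    and SLC: "M > 0" "\<And>k h. h \<in> {1..C} \<Longrightarrow>
                (\<Sum>i\<in>{1..\<Delta>}. \<Sum>J\<in>{1..S}. W (i - 1) k J h) = M"
    and BUC: "Mbar > 0" "\<And>k h. h \<in> {1..C} \<Longrightarrow>
                (\<Sum>i\<in>{1..\<Delta>}. \<Sum>J\<in>{1..S}. \<bar>W (i - 1) k J h\<bar>) \<le> Mbar"
    and B_ds: "\<And>k. doubly_stochastic S (B k)"
    and B_scr: "\<And>k. scrambling S (B k)"
    and kappa_pos: "\<kappa> > 0"
    and B_kappa: "\<And>k I J. I \<in> {1..S} \<Longrightarrow> J \<in> {1..S} \<Longrightarrow> B k I J \<noteq> 0 \<Longrightarrow> B k I J \<ge> \<kappa>"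
    and alpha_pos: "\<And>k. \<alpha> k > 0"
    and alpha_mono: "\<And>k. \<alpha> (Suc k) \<le> \<alpha> k"
    and alpha_div: "\<not> summable \<alpha>"
    and alpha_sq: "summable (\<lambda>k. (\<alpha> k)\<^sup>2)"
    and x_init: "\<And>J. J \<in> {1..S} \<Longrightarrow> x J 0 0 \<in> X"
    and x_step: "\<And>J i k. J \<in> {1..S} \<Longrightarrow> i \<in> {1..\<Delta>} \<Longrightarrow>
        x J i k = closest_point X (x J (i - 1) k
                    - \<alpha> k *\<^sub>R (\<Sum>h\<in>{1..C}. W (i - 1) k J h *\<^sub>R g h (x J (i - 1) k)))"
    and x_cons: "\<And>I k. I \<in> {1..S} \<Longrightarrow>
        x I 0 (Suc k) = (\<Sum>J\<in>{1..S}. B k I J *\<^sub>R x J \<Delta> k)"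
  shows "(\<lambda>k. Max {norm (x I 0 k - x G 0 k) | I G. I \<in> {1..S} \<and> G \<in> {1..S}})
           \<longlonglongrightarrow> 0"
proof -
  interpret projected_consensus S C \<Delta> X g L W Mbar B \<kappa> \<alpha> x
    using S_pos X_ne X_convex compact_imp_closed[OF X_compact] g_bound BUC(2) B_ds B_scr
      kappa_pos B_kappa less_imp_le[OF alpha_pos] x_init x_step x_cons
    by (rule projected_consensus.intro)
  show ?thesis
    using consensus_gap_tendsto_zero[OF LIMSEQ_zero_of_summable_square[OF alpha_sq]]
    unfolding consensus_gap_def[abs_def] .
qed

end
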